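(* Let $L=L_2(q)=\mathrm{PSL}_2(q)$ be simple and let $r$ be an odd prime dividing $|L|$ but not dividing $q$. Then for every involution $x\in\mathrm{PGL}_2(q)$ (viewed as an automorphism of $L$) one has $\beta_r(x,L)=2$.
   Context: $\mathrm{PGL}_2(q)$ is identified with the group of inner-diagonal automorphisms of $L=\mathrm{PSL}_2(q)$. For a nonabelian finite simple group $L$ (identified with $\mathrm{Inn}(L)$), a nontrivial $x\in\mathrm{Aut}(L)$ and a prime $r$ dividing $|L|$, $\beta_r(x,L)$ is the smallest $k$ such that some $g_1,\dots,g_k\in L$ give a subgroup $\langle x^{g_1},\dots,x^{g_k}\rangle$ of $\langle L,x\rangle$ of order divisible by $r$. *)

theory Defs
  imports "HOL-Algebra.Algebra" "HOL-Analysis.Determinants"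
begin

text \<open>2x2 matrices over a finite field 'a with q = CARD('a) elements.\<close>

definition GL2 :: "('a::{finite,field}^2^2) monoid" where
  "GL2 = \<lparr>carrier = {A. det A \<noteq> 0}, monoid.mult = (\<lambda>A B. A ** B), one = mat 1\<rparr>"

definition scalars :: "('a::{finite,field}^2^2) set" where
  "scalars = {mat c | c. c \<noteq> 0}"

definition SL2 :: "('a::{finite,field}^2^2) set" where
  "SL2 = {A. det A = 1}"

definition PGL2 :: "('a::{finite,field}^2^2) set monoid" where
  "PGL2 = GL2 Mod scalars"

text \<open>PSL_2(q) as the image of SL_2(q) in PGL_2(q) (inner automorphisms of L).\<close>
definition PSL2 :: "('a::{finite,field}^2^2) set monoid" where
  "PSL2 = PGL2\<lparr>carrier := (\<lambda>A. scalars #>\<^bsub>GL2\<^esub> A) ` SL2\<rparr>"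

definition beta :: "('b, 'c) monoid_scheme \<Rightarrow> 'b set \<Rightarrow> 'b \<Rightarrow> nat \<Rightarrow> nat" where
  "beta G L x r = (LEAST k. \<exists>g. (\<forall>i<k. g i \<in> L) \<and>
      r dvd card (generate G ((\<lambda>i. inv\<^bsub>G\<^esub> (g i) \<otimes>\<^bsub>G\<^esub> x \<otimes>\<^bsub>G\<^esub> g i) ` {..<k})))"

end

theory Submission
  imports Defs
begin

(* Write x = [Y] with Y in GL_2(q).  One conjugate of an involution generates a group of order
   at most 2, which no odd prime divides, so beta_r(x, L) >= 2.  For the converse, a nonscalar
   A in GL_2(q) satisfies A^n = u_n A + v_n I, where u_n = U_n(tr A, det A) is a Lucas sequence,
   and A^n is scalar iff u_n = 0.  Since U_n(l s, l^2 d) = l^(n-1) U_n(s, d), the order of [A]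
   in PGL_2(q) only depends on tr(A)^2 / det(A).  By Cauchy, PSL_2(q) contains an element [T] of
   order r; as r is odd, tr T is nonzero.  Since x is an involution, tr Y = 0, so Y is similar to the
   companion matrix of X^2 + det Y; solving norm equations a^2 + D b^2 = c in the finite field
   gives G in SL_2(q) with tr(Y G^-1 Y G) = det(Y) tr(T).  Then x x^[G] has the invariant of T,
   hence order r, and r divides the order of <x, x^[G]>. *)

section \<open>Element orders and conjugate involutions\<close>

lemma (in group) card_generate_involution_dvd_2:
  assumes "y \<in> carrier G" and "y \<otimes> y = \<one>"
  shows "card (generate G {y}) dvd 2"
proof -
  have "y [^] (2::nat) = \<one>"
    using assms by (simp add: numeral_2_eq_2)
  then show ?thesis
    using assms(1) by (simp add: pow_eq_id flip: generate_pow_card)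
qed

lemma (in group) conj_involution:
  assumes "g \<in> carrier G" "x \<in> carrier G" "x \<otimes> x = \<one>"
  shows "(inv g \<otimes> x \<otimes> g) \<otimes> (inv g \<otimes> x \<otimes> g) = \<one>"
proof -
  have "g \<otimes> (inv g \<otimes> y) = y" if "y \<in> carrier G" for y
    using assms(1) that by (simp flip: m_assoc)
  moreover have "x \<otimes> (x \<otimes> y) = y" if "y \<in> carrier G" for y
    using assms(2,3) that by (simp flip: m_assoc)
  ultimately show ?thesis
    using assms by (simp add: m_assoc)
qed

lemma (in group) ord_dvd_card_subgroup:
  assumes "subgroup H G" and "finite H" and "a \<in> H"
  shows "ord a dvd card H"
proof -
  interpret K: group "G\<lparr>carrier := H\<rparr>"
    using assms(1) by (rule subgroup.subgroup_is_group) (rule is_group)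
  have "a [^]\<^bsub>G\<lparr>carrier := H\<rparr>\<^esub> card H = \<one>"
    using K.pow_order_eq_1[of a] assms(3) by (simp add: order_def)
  then have "a [^] card H = \<one>"
    by (simp add: nat_pow_def)
  then show ?thesis
    using assms subgroup.subset pow_eq_id by blast
qed

lemma (in group) ord_dvd_card_generate:
  assumes "finite (carrier G)" and "S \<subseteq> carrier G" and "a \<in> generate G S"
  shows "ord a dvd card (generate G S)"
  using assms generate_is_subgroup generate_incl finite_subset
  by (metis ord_dvd_card_subgroup)

lemma (in group) exists_ord_eq_prime_in_subgroup:
  assumes H: "subgroup H G" "finite H" and p: "Factorial_Ring.prime p" "p dvd card H"
  shows "\<exists>a\<in>H. ord a = p"
proof -
  interpret K: group "G\<lparr>carrier := H\<rparr>"
    using H(1) by (rule subgroup.subgroup_is_group) (rule is_group)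
  have "order (G\<lparr>carrier := H\<rparr>) = p ^ 1 * (card H div p)"
    using p(2) by (simp add: order_def)
  from sylow_thm[OF p(1) K.is_group this] H(2)
  obtain Q where Q: "subgroup Q (G\<lparr>carrier := H\<rparr>)" and card_Q: "card Q = p"
    by auto
  have "Q \<noteq> {\<one>}"
    using card_Q prime_gt_1_nat[OF p(1)] by auto
  then obtain a where a: "a \<in> Q" "a \<noteq> \<one>"
    using subgroup.one_closed[OF Q] by auto
  have Q_G: "subgroup Q G"
    by (rule incl_subgroup[OF H(1) Q])
  have a_H: "a \<in> H"
    using subgroup.subset[OF Q] a(1) by (simp add: subset_iff)
  have "finite Q"
    using card_ge_0_finite[of Q] card_Q prime_gt_0_nat[OF p(1)] by simp
  then have "ord a dvd card Q"
    by (rule ord_dvd_card_subgroup[OF Q_G _ a(1)])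
  moreover have "ord a \<noteq> 1"
    using ord_eq_1[OF subgroup.mem_carrier[OF H(1) a_H]] a(2) by simp
  ultimately have "ord a = p"
    using card_Q p(1) unfolding prime_nat_iff by blast
  then show ?thesis
    using a_H by blast
qed

lemma (in group) beta_involution_eq_2:
  assumes L: "L \<subseteq> carrier G" and x: "x \<in> carrier G" "x \<otimes> x = \<one>" and r: "2 < r"
    and gh: "g \<in> L" "h \<in> L" and dvd: "r dvd card (generate G {inv g \<otimes> x \<otimes> g, inv h \<otimes> x \<otimes> h})"
  shows "beta G L x r = 2"
  unfolding beta_def
proof (rule Least_equality)
  let ?f = "\<lambda>i::nat. if i = 0 then g else h"
  have "(\<lambda>i. inv ?f i \<otimes> x \<otimes> ?f i) ` {..<2} = {inv g \<otimes> x \<otimes> g, inv h \<otimes> x \<otimes> h}"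
    by (auto simp: numeral_2_eq_2 lessThan_Suc)
  then show "\<exists>f. (\<forall>i<2::nat. f i \<in> L) \<and>
      r dvd card (generate G ((\<lambda>i. inv f i \<otimes> x \<otimes> f i) ` {..<2}))"
    using gh dvd by (intro exI[of _ ?f]) auto
next
  fix k :: nat
  assume "\<exists>f. (\<forall>i<k. f i \<in> L) \<and> r dvd card (generate G ((\<lambda>i. inv f i \<otimes> x \<otimes> f i) ` {..<k}))"
  then obtain f where f: "\<forall>i<k. f i \<in> L"
    and r_dvd: "r dvd card (generate G ((\<lambda>i. inv f i \<otimes> x \<otimes> f i) ` {..<k}))"
    by blast
  show "2 \<le> k"
  proof (rule ccontr)
    assume "\<not> 2 \<le> k"
    then consider "k = 0" | "k = 1"
      by linarith
    then have "card (generate G ((\<lambda>i. inv f i \<otimes> x \<otimes> f i) ` {..<k})) dvd 2"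
    proof cases
      case 1
      then show ?thesis
        by (simp add: generate_empty)
    next
      case 2
      have "f 0 \<in> carrier G"
        using f L 2 by auto
      then show ?thesis
        using 2 x by (simp add: lessThan_Suc card_generate_involution_dvd_2 conj_involution)
    qed
    then have "r dvd 2"
      using r_dvd by (rule dvd_trans[rotated])
    with r show False
      by (auto dest: dvd_imp_le)
  qed
qed

section \<open>Two-by-two matrices\<close>

lemma matrix_mult_2:
  "((A::'a::comm_semiring_1^2^2) ** B) $ i $ j = A$i$1 * B$1$j + A$i$2 * B$2$j"
  by (simp add: matrix_matrix_mult_def sum_2)

lemma mat_nth: "(mat c :: 'a::zero^'n^'n) $ i $ j = (if i = j then c else 0)"
  by (simp add: mat_def)

lemma matrix2_eq_iff:
  "(A::'a^2^2) = B \<longleftrightarrow> A$1$1 = B$1$1 \<and> A$1$2 = B$1$2 \<and> A$2$1 = B$2$1 \<and> A$2$2 = B$2$2"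
  by (auto simp add: vec_eq_iff forall_2)

lemma trace_2: "trace (A::'a::comm_semiring_1^2^2) = A$1$1 + A$2$2"
  by (simp add: trace_def sum_2)

definition matrix2 :: "'a \<Rightarrow> 'a \<Rightarrow> 'a \<Rightarrow> 'a \<Rightarrow> 'a^2^2" where
  "matrix2 a b c d = (\<chi> i j. if i = 1 then if j = 1 then a else b else if j = 1 then c else d)"

lemma matrix2_nth [simp]:
  "matrix2 a b c d $ 1 $ 1 = a" "matrix2 a b c d $ 1 $ 2 = b"
  "matrix2 a b c d $ 2 $ 1 = c" "matrix2 a b c d $ 2 $ 2 = d"
  by (simp_all add: matrix2_def)

lemmas matrix2_simps = matrix_mult_2 mat_nth matrix2_eq_iff det_2 trace_2

lemma cayley_hamilton_2: "(A::'a::comm_ring_1^2^2) ** A = mat (trace A) ** A - mat (det A)"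
  by (simp add: matrix2_simps algebra_simps)

lemma mat_mult_nth: "(mat c ** (A::'a::comm_semiring_1^2^2)) $ i $ j = c * A $ i $ j"
  using exhaust_2[of i] by (auto simp: matrix_mult_2 mat_nth)

lemma mat_mult_comm: "mat c ** (A::'a::comm_semiring_1^2^2) = A ** mat c"
  by (simp add: matrix2_simps algebra_simps)

lemma mat_mult_mat: "mat a ** mat b = (mat (a * b) :: 'a::comm_semiring_1^2^2)"
  by (simp add: matrix2_simps)

lemma det_mat_2 [simp]: "det (mat c :: 'a::comm_ring_1^2^2) = c * c"
  by (simp add: matrix2_simps)

definition adj2 :: "'a::comm_ring_1^2^2 \<Rightarrow> 'a^2^2" where
  "adj2 A = matrix2 (A$2$2) (- A$1$2) (- A$2$1) (A$1$1)"

lemma adj2_left: "adj2 A ** A = mat (det A)"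
  by (simp add: adj2_def matrix2_simps algebra_simps)

lemma adj2_right: "A ** adj2 A = mat (det A)"
  by (simp add: adj2_def matrix2_simps algebra_simps)

definition inv2 :: "'a::field^2^2 \<Rightarrow> 'a^2^2" where
  "inv2 A = mat (inverse (det A)) ** adj2 A"

lemma inv2_left: "det A \<noteq> 0 \<Longrightarrow> inv2 A ** A = mat 1"
  by (simp add: inv2_def adj2_left mat_mult_mat flip: matrix_mul_assoc)

lemma inv2_right: "det A \<noteq> 0 \<Longrightarrow> A ** inv2 A = mat 1"
proof -
  have "A ** inv2 A = mat (inverse (det A)) ** (A ** adj2 A)"
    by (metis inv2_def mat_mult_comm matrix_mul_assoc)
  then show "det A \<noteq> 0 \<Longrightarrow> A ** inv2 A = mat 1"
    by (simp add: adj2_right mat_mult_mat)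
qed

lemma det_inv2: "det A \<noteq> 0 \<Longrightarrow> det (inv2 A) = inverse (det A)"
  using det_mul[of "inv2 A" A] inv2_left[of A] by (simp add: field_simps)

lemma inv2_unique: "det A \<noteq> 0 \<Longrightarrow> B ** A = mat 1 \<Longrightarrow> inv2 A = B"
  by (metis inv2_right matrix_mul_assoc matrix_mul_lid matrix_mul_rid)

lemma inv2_left_cancel: "det H \<noteq> 0 \<Longrightarrow> B ** inv2 H ** H = B"
  by (metis inv2_left matrix_mul_assoc matrix_mul_rid)

lemma inv2_right_cancel: "det H \<noteq> 0 \<Longrightarrow> B ** H ** inv2 H = B"
  by (metis inv2_right matrix_mul_assoc matrix_mul_rid)

lemma trace_conj: "det H \<noteq> 0 \<Longrightarrow> trace (H ** B ** inv2 H) = trace B"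
  by (metis inv2_left_cancel matrix_mul_assoc trace_mul_sym)

lemma trace_eq_0_if_square_scalar:
  fixes A :: "'a::field^2^2"
  assumes "A ** A = mat l" and "\<nexists>c. A = mat c"
  shows "trace A = 0"
proof (rule ccontr)
  assume "trace A \<noteq> 0"
  have "mat (trace A) ** A = mat (l + det A)"
    using assms(1) cayley_hamilton_2[of A] by (simp add: matrix2_simps algebra_simps)
  then have entry: "trace A * A $ i $ j = (if i = j then l + det A else 0)" for i j
    by (metis mat_mult_nth mat_nth)
  have "A $ i $ j = (if i = j then (l + det A) / trace A else 0)" for i j
    using entry[of i j] \<open>trace A \<noteq> 0\<close> by (cases "i = j") (simp_all add: eq_divide_eq mult.commute)
  then have "A = mat ((l + det A) / trace A)"
    by (simp add: vec_eq_iff mat_nth)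
  with assms(2) show False
    by blast
qed

lemma square_scalar_if_trace_eq_0:
  "trace (A::'a::comm_ring_1^2^2) = 0 \<Longrightarrow> A ** A = mat (- det A)"
  using cayley_hamilton_2[of A] by (simp add: matrix2_simps)

section \<open>The groups GL2, PGL2 and PSL2\<close>

lemma GL2_simps [simp]:
  "carrier GL2 = {A. det A \<noteq> 0}" "monoid.mult GL2 A B = A ** B" "one GL2 = mat 1"
  by (simp_all add: GL2_def)

lemma GL2_group: "group (GL2 :: ('a::{finite,field}^2^2) monoid)"
proof (rule groupI)
  fix A :: "'a^2^2"
  assume "A \<in> carrier GL2"
  then show "\<exists>B\<in>carrier GL2. B \<otimes>\<^bsub>GL2\<^esub> A = \<one>\<^bsub>GL2\<^esub>"
    using inv2_left[of A] det_inv2[of A] by (intro bexI[of _ "inv2 A"]) simp_all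
qed (auto simp: det_mul matrix_mul_assoc)

lemma inv_GL2: "A \<in> carrier GL2 \<Longrightarrow> inv\<^bsub>GL2\<^esub> A = inv2 (A::'a::{finite,field}^2^2)"
  using group.inv_equality[OF GL2_group, of "inv2 A" A] inv2_left[of A] det_inv2[of A] by simp

lemma scalars_iff: "A \<in> scalars \<longleftrightarrow> (\<exists>c. A = mat c) \<and> (A::'a::{finite,field}^2^2) \<in> carrier GL2"
  by (auto simp: scalars_def)

lemma scalars_subgroup: "subgroup scalars (GL2 :: ('a::{finite,field}^2^2) monoid)"
proof (rule group.subgroupI[OF GL2_group])
  show "(scalars :: ('a^2^2) set) \<subseteq> carrier GL2"
    by (auto simp: scalars_iff)
  have "mat 1 \<in> (scalars :: ('a^2^2) set)"
    by (auto simp: scalars_def)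
  then show "(scalars :: ('a^2^2) set) \<noteq> {}"
    by blast
next
  fix A B :: "'a^2^2"
  assume "A \<in> scalars" "B \<in> scalars"
  then obtain a b where "A = mat a" "B = mat b" "a \<noteq> 0" "b \<noteq> 0"
    by (auto simp: scalars_def)
  moreover have "inv2 (mat a) = mat (inverse a)"
    using \<open>a \<noteq> 0\<close> by (simp add: inv2_def adj2_def matrix2_simps field_simps)
  ultimately have "inv\<^bsub>GL2\<^esub> A = mat (inverse a)" "A \<otimes>\<^bsub>GL2\<^esub> B = mat (a * b)"
    using inv_GL2[of A] by (simp_all add: mat_mult_mat)
  then show "inv\<^bsub>GL2\<^esub> A \<in> scalars" "A \<otimes>\<^bsub>GL2\<^esub> B \<in> scalars"
    using \<open>a \<noteq> 0\<close> \<open>b \<noteq> 0\<close> by (auto simp: scalars_def)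
qed

lemma scalars_normal: "scalars \<lhd> (GL2 :: ('a::{finite,field}^2^2) monoid)"
proof -
  interpret group "GL2 :: ('a^2^2) monoid"
    by (rule GL2_group)
  have "A \<otimes>\<^bsub>GL2\<^esub> B \<otimes>\<^bsub>GL2\<^esub> inv\<^bsub>GL2\<^esub> A \<in> scalars"
    if "A \<in> carrier GL2" "B \<in> scalars" for A B :: "'a^2^2"
  proof -
    obtain b where "B = mat b"
      using \<open>B \<in> scalars\<close> by (auto simp: scalars_def)
    then have "A \<otimes>\<^bsub>GL2\<^esub> B \<otimes>\<^bsub>GL2\<^esub> inv\<^bsub>GL2\<^esub> A = B \<otimes>\<^bsub>GL2\<^esub> (A \<otimes>\<^bsub>GL2\<^esub> inv\<^bsub>GL2\<^esub> A)"
      using mat_mult_comm[of b A] by (simp add: matrix_mul_assoc)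
    then show ?thesis
      using that r_inv[of A] by simp
  qed
  then show ?thesis
    using scalars_subgroup by (simp add: normal_inv_iff)
qed

abbreviation proj :: "'a::{finite,field}^2^2 \<Rightarrow> ('a^2^2) set" where
  "proj \<equiv> r_coset GL2 scalars"

lemma PGL2_group: "group (PGL2 :: ('a::{finite,field}^2^2) set monoid)"
  unfolding PGL2_def by (rule normal.factorgroup_is_group[OF scalars_normal])

lemma proj_hom: "group_hom GL2 (PGL2 :: ('a::{finite,field}^2^2) set monoid) proj"
  using normal.r_coset_hom_Mod[OF scalars_normal] GL2_group PGL2_group
  unfolding PGL2_def group_hom_def group_hom_axioms_def by blast

lemma PGL2_carrier: "carrier (PGL2 :: ('a::{finite,field}^2^2) set monoid) = proj ` carrier GL2"
  unfolding PGL2_def by (rule carrier_FactGroup)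

lemma proj_mult:
  "A \<in> carrier GL2 \<Longrightarrow> B \<in> carrier GL2 \<Longrightarrow>
    proj (A ** B) = proj A \<otimes>\<^bsub>PGL2\<^esub> proj (B::'a::{finite,field}^2^2)"
  using group_hom.hom_mult[OF proj_hom] by simp

lemma proj_eq_one_iff:
  "A \<in> carrier GL2 \<Longrightarrow> proj A = \<one>\<^bsub>PGL2\<^esub> \<longleftrightarrow> (A::'a::{finite,field}^2^2) \<in> scalars"
  unfolding PGL2_def
  using group.rcos_self[OF GL2_group _ scalars_subgroup]
    subgroup.rcos_const[OF scalars_subgroup GL2_group]
  by auto

lemma proj_pow_eq_one_iff:
  "A \<in> carrier GL2 \<Longrightarrow>
    proj A [^]\<^bsub>PGL2\<^esub> (n::nat) = \<one>\<^bsub>PGL2\<^esub> \<longleftrightarrow> A [^]\<^bsub>GL2\<^esub> n \<in> (scalars :: ('a::{finite,field}^2^2) set)"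
  using group_hom.hom_nat_pow[OF proj_hom] proj_eq_one_iff
    monoid.nat_pow_closed[OF group.is_monoid[OF GL2_group]]
  by metis

lemma proj_involution_iff_trace_eq_0:
  fixes A :: "'a::{finite,field}^2^2"
  assumes "A \<in> carrier GL2" and "A \<notin> scalars"
  shows "proj A \<otimes>\<^bsub>PGL2\<^esub> proj A = \<one>\<^bsub>PGL2\<^esub> \<longleftrightarrow> trace A = 0"
proof -
  have "proj A \<otimes>\<^bsub>PGL2\<^esub> proj A = \<one>\<^bsub>PGL2\<^esub> \<longleftrightarrow> A ** A \<in> scalars"
    using assms(1) proj_eq_one_iff[of "A ** A"] by (simp add: det_mul flip: proj_mult)
  also have "\<dots> \<longleftrightarrow> trace A = 0"
  proof
    assume "A ** A \<in> scalars"
    then obtain l where "A ** A = mat l"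
      by (auto simp: scalars_def)
    then show "trace A = 0"
      using assms by (auto simp: scalars_iff intro: trace_eq_0_if_square_scalar)
  next
    assume "trace A = 0"
    then show "A ** A \<in> scalars"
      using assms(1) by (auto simp: scalars_def square_scalar_if_trace_eq_0)
  qed
  finally show ?thesis .
qed

lemma SL2_subgroup: "subgroup SL2 (GL2 :: ('a::{finite,field}^2^2) monoid)"
  by (intro group.subgroupI[OF GL2_group])
     (auto simp: SL2_def det_mul inv_GL2 det_inv2 intro: exI[of _ "mat 1"])

lemma PSL2_subgroup: "subgroup (carrier PSL2) (PGL2 :: ('a::{finite,field}^2^2) set monoid)"
  using group_hom.subgroup_img_is_subgroup[OF proj_hom SL2_subgroup]
  by (simp add: PSL2_def)

section \<open>Orders in PGL2 via Lucas sequences\<close>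

text \<open>By Cayley--Hamilton, a matrix of trace \<open>s\<close> and determinant \<open>d\<close> has
  \<open>A^n = a\<^sub>n A + b\<^sub>n I\<close> with \<open>(a\<^sub>n, b\<^sub>n) = lucas s d n\<close>; \<open>a\<^sub>n\<close> is the Lucas sequence
  \<open>U\<^sub>n(s, d)\<close>.\<close>

fun lucas :: "'a::comm_ring_1 \<Rightarrow> 'a \<Rightarrow> nat \<Rightarrow> 'a \<times> 'a" where
  "lucas s d 0 = (0, 1)"
| "lucas s d (Suc n) = (s * fst (lucas s d n) + snd (lucas s d n), - d * fst (lucas s d n))"

lemma GL2_pow_lucas:
  "A [^]\<^bsub>GL2\<^esub> n =
    mat (fst (lucas (trace A) (det A) n)) ** A + mat (snd (lucas (trace A) (det A) n))"
proof (induction n)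
  case 0
  then show ?case by (simp add: matrix2_simps)
next
  case (Suc n)
  then show ?case
    by (simp add: matrix2_simps algebra_simps)
qed

lemma GL2_pow_in_scalars_iff:
  fixes A :: "'a::{finite,field}^2^2"
  assumes A: "A \<in> carrier GL2" "A \<notin> scalars"
  shows "A [^]\<^bsub>GL2\<^esub> n \<in> scalars \<longleftrightarrow> fst (lucas (trace A) (det A) n) = 0"
proof -
  obtain a b where ab: "lucas (trace A) (det A) n = (a, b)"
    by fastforce
  have pow: "A [^]\<^bsub>GL2\<^esub> n = mat a ** A + mat b"
    using GL2_pow_lucas[of A n] ab by simp
  have pow_GL2: "A [^]\<^bsub>GL2\<^esub> n \<in> carrier GL2"
    using A(1) monoid.nat_pow_closed[OF group.is_monoid[OF GL2_group]] by blast
  show ?thesis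
    unfolding ab fst_conv
  proof
    assume "A [^]\<^bsub>GL2\<^esub> n \<in> scalars"
    then obtain c where c: "mat a ** A + mat b = mat c"
      using pow by (auto simp: scalars_def)
    show "a = 0"
    proof (rule ccontr)
      assume "a \<noteq> 0"
      with c have "A = mat ((c - b) / a)"
        by (auto simp: matrix2_simps field_simps)
      then show False
        using A by (auto simp: scalars_iff)
    qed
  next
    assume "a = 0"
    then show "A [^]\<^bsub>GL2\<^esub> n \<in> scalars"
      using pow pow_GL2 by (auto simp: scalars_iff matrix2_simps)
  qed
qed

lemma lucas_homogeneous:
  "l * fst (lucas (l * s) (l\<^sup>2 * d) n) = l ^ n * fst (lucas s d n) \<and>
    snd (lucas (l * s) (l\<^sup>2 * d) n) = l ^ n * snd (lucas s d n)"
proof (induction n)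
  case 0
  then show ?case by simp
next
  case (Suc n)
  define a' b' where "a' = fst (lucas (l * s) (l\<^sup>2 * d) n)" and "b' = snd (lucas (l * s) (l\<^sup>2 * d) n)"
  define a b where "a = fst (lucas s d n)" and "b = snd (lucas s d n)"
  have IH: "l * a' = l ^ n * a" "b' = l ^ n * b"
    using Suc.IH by (simp_all add: a'_def b'_def a_def b_def)
  have "l * fst (lucas (l * s) (l\<^sup>2 * d) (Suc n)) = l * s * (l * a') + l * b'"
    by (simp add: a'_def b'_def algebra_simps)
  also have "\<dots> = l ^ Suc n * fst (lucas s d (Suc n))"
    unfolding IH by (simp add: a_def b_def algebra_simps)
  finally have fst_eq: "l * fst (lucas (l * s) (l\<^sup>2 * d) (Suc n)) = l ^ Suc n * fst (lucas s d (Suc n))" .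
  have "snd (lucas (l * s) (l\<^sup>2 * d) (Suc n)) = - (l * d) * (l * a')"
    by (simp add: a'_def algebra_simps power2_eq_square)
  also have "\<dots> = l ^ Suc n * snd (lucas s d (Suc n))"
    unfolding IH(1) by (simp add: a_def algebra_simps)
  finally show ?case
    using fst_eq by blast
qed

lemma lucas_2_1: "lucas 2 1 n = (of_nat n, 1 - of_nat n)"
  by (induction n) (simp_all add: algebra_simps)

text \<open>The last hypothesis excludes a scalar \<open>A\<close>: then \<open>B\<close> is a scalar multiple of a
  unipotent matrix, whose order in PGL2 is the characteristic.\<close>

lemma ord_proj_eq_if_invariants:
  fixes A B :: "'a::{finite,field}^2^2"
  assumes A: "A \<in> carrier GL2" and B: "B \<in> carrier GL2" "B \<notin> scalars"
    and l: "l \<noteq> 0" "trace A = l * trace B" "det A = l\<^sup>2 * det B"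
    and ord_B: "of_nat (group.ord PGL2 (proj B)) \<noteq> (0::'a)"
  shows "group.ord PGL2 (proj A) = group.ord PGL2 (proj B)"
proof -
  interpret PGL2: group "PGL2 :: ('a^2^2) set monoid"
    by (rule PGL2_group)
  have proj_closed: "proj C \<in> carrier PGL2" if "C \<in> carrier GL2" for C :: "'a^2^2"
    using that by (simp add: PGL2_carrier)
  let ?u = "\<lambda>C n. fst (lucas (trace C) (det C) n)"
  have u_A_iff: "?u A n = 0 \<longleftrightarrow> ?u B n = 0" for n
    using lucas_homogeneous[of l "trace B" "det B" n] l by auto
  define m where "m = PGL2.ord (proj B)"
  have "?u B m = 0"
    using PGL2.pow_ord_eq_1[OF proj_closed[OF B(1)]] proj_pow_eq_one_iff[OF B(1)]
      GL2_pow_in_scalars_iff[OF B] by (simp add: m_def)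
  have A_nonscalar: "A \<notin> scalars"
  proof
    assume "A \<in> scalars"
    then obtain c where c: "A = mat c" "c \<noteq> 0"
      by (auto simp: scalars_def)
    then have "c * ?u A m = c ^ m * of_nat m"
      using lucas_homogeneous[of c 2 1 m]
      by (simp add: lucas_2_1 trace_2 mat_nth power2_eq_square mult.commute)
    moreover have "?u A m = 0"
      using u_A_iff \<open>?u B m = 0\<close> by blast
    ultimately show False
      using c(2) ord_B by (simp add: m_def)
  qed
  have "proj A [^]\<^bsub>PGL2\<^esub> n = \<one>\<^bsub>PGL2\<^esub> \<longleftrightarrow> PGL2.ord (proj B) dvd n" for n
    using proj_pow_eq_one_iff[OF A] proj_pow_eq_one_iff[OF B(1)]
      GL2_pow_in_scalars_iff[OF A A_nonscalar] GL2_pow_in_scalars_iff[OF B] u_A_iff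
      PGL2.pow_eq_id[OF proj_closed[OF B(1)]]
    by simp
  then show ?thesis
    using PGL2.ord_unique[OF proj_closed[OF A]] by blast
qed

section \<open>Finite fields\<close>

lemma of_nat_CARD_eq_0: "of_nat CARD('a) = (0::'a::{finite,comm_ring_1})"
proof -
  have bij: "bij_betw (\<lambda>x::'a. x + 1) UNIV UNIV"
    by (rule bij_betwI[of _ _ _ "\<lambda>x. x - 1"]) auto
  have "(\<Sum>x\<in>UNIV. x + (1::'a)) = (\<Sum>x\<in>UNIV. x)"
    by (rule sum.reindex_bij_betw[OF bij, of "\<lambda>x. x"])
  then show ?thesis
    by (simp add: sum.distrib)
qed

lemma of_nat_prime_neq_0:
  assumes "Factorial_Ring.prime r" and "\<not> r dvd CARD('a)"
  shows "of_nat r \<noteq> (0::'a::{finite,field})"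
proof
  assume "of_nat r = (0::'a)"
  then have "CHAR('a) dvd r"
    by (simp add: of_nat_eq_0_iff_char_dvd)
  then have "CHAR('a) = r"
    using assms(1) CHAR_not_1[where 'a='a] unfolding prime_nat_iff by auto
  moreover have "CHAR('a) dvd CARD('a)"
    using of_nat_CARD_eq_0[where 'a='a] by (simp add: of_nat_eq_0_iff_char_dvd)
  ultimately show False
    using assms(2) by simp
qed

lemma card_squares: "CARD('a::{finite,field}) + 1 \<le> 2 * card (range (\<lambda>x::'a. x * x))"
proof -
  define S where "S = range (\<lambda>x::'a. x * x)"
  define root where "root s = (SOME z::'a. z * z = s)" for s
  have root: "root (x * x) * root (x * x) = x * x" for x
    unfolding root_def by (rule someI[of _ x]) simp
  define f where "f x = (x * x, x = root (x * x))" for x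
  have "inj f"
  proof (rule injI)
    fix x y
    assume "f x = f y"
    then have xy: "x * x = y * y" and "(x = root (x * x)) = (y = root (y * y))"
      by (auto simp: f_def)
    moreover have "x = root (x * x) \<or> x = - root (x * x)" "y = root (x * x) \<or> y = - root (x * x)"
      using root[of x] xy by (metis square_eq_iff)+
    ultimately show "x = y"
      by auto
  qed
  have "root 0 = 0"
    using root[of 0] by simp
  then have "range f \<subseteq> (S \<times> UNIV) - {(0, False)}"
    by (auto simp: f_def S_def)
  then have "card (range f) \<le> card ((S \<times> (UNIV::bool set)) - {(0, False)})"
    by (intro card_mono) simp_all
  also have "\<dots> = 2 * card S - 1"
    using card_Diff_singleton[of "(0::'a, False)" "S \<times> (UNIV::bool set)"]
    by (simp add: S_def card_cartesian_product image_iff)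
  finally have "CARD('a) \<le> 2 * card S - 1"
    using card_image[OF \<open>inj f\<close>] by simp
  moreover have "card S \<ge> 1"
    unfolding S_def by (simp add: Suc_le_eq card_gt_0_iff)
  ultimately show ?thesis
    unfolding S_def by linarith
qed

lemma sum_of_squares_eq:
  assumes "(a::'a::{finite,field}) \<noteq> 0"
  shows "\<exists>x y. x * x + a * (y * y) = c"
proof -
  define S where "S = range (\<lambda>x::'a. x * x)"
  define T where "T = (\<lambda>s. c - a * s) ` S"
  have "card T = card S"
    unfolding T_def using assms by (intro card_image) (auto simp: inj_on_def)
  moreover have "CARD('a) + 1 \<le> 2 * card S"
    unfolding S_def by (rule card_squares)
  ultimately have "S \<inter> T \<noteq> {}"
  proof (intro notI)
    assume "card T = card S" "CARD('a) + 1 \<le> 2 * card S" "S \<inter> T = {}"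
    moreover have "card (S \<union> T) \<le> CARD('a)"
      by (rule card_mono) auto
    ultimately show False
      using card_Un_disjoint[of S T] by simp
  qed
  then obtain x y where "x * x = c - a * (y * y)"
    unfolding S_def T_def by blast
  then have "x * x + a * (y * y) = c"
    by (simp add: eq_diff_eq)
  then show ?thesis
    by blast
qed

lemma square_surj_char_2:
  assumes "(2::'a::{finite,field}) = 0"
  shows "\<exists>x::'a. x * x = c"
proof -
  have "inj (\<lambda>x::'a. x * x)"
  proof (rule injI)
    fix x y :: 'a
    assume "x * x = y * y"
    then have "x = y \<or> x = - y"
      by (simp add: square_eq_iff)
    moreover have "- y = y"
      using assms by (metis add_eq_0_iff2 mult_2 mult_zero_left)
    ultimately show "x = y"
      by auto
  qed
  then have "surj (\<lambda>x::'a. x * x)"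
    by (simp add: finite_UNIV_inj_surj)
  then show ?thesis
    by (metis surjD)
qed

section \<open>Traces of products of two conjugate involutions\<close>

definition companion2 :: "'a::comm_ring_1 \<Rightarrow> 'a^2^2" where
  "companion2 D = matrix2 0 (- D) 1 0"

lemma similar_companion2:
  fixes Y :: "'a::field^2^2"
  assumes "trace Y = 0" and "\<nexists>c. Y = mat c"
  shows "\<exists>H. det H \<noteq> 0 \<and> Y ** H = H ** companion2 (det Y)"
proof -
  define a b c where "a = Y$1$1" and "b = Y$1$2" and "c = Y$2$1"
  have Y: "Y = matrix2 a b c (- a)"
    using assms(1) by (simp add: a_def b_def c_def matrix2_simps eq_neg_iff_add_eq_0 add.commute)
  then have det_Y: "det Y = - (a * a) - b * c"
    by (simp add: det_2)
  have "\<not> (c = 0 \<and> b = 0 \<and> a = - a)"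
  proof
    assume "c = 0 \<and> b = 0 \<and> a = - a"
    then have "Y = mat a"
      by (simp add: Y matrix2_simps)
    with assms(2) show False
      by blast
  qed
  then consider "c \<noteq> 0" | "c = 0" "b \<noteq> 0" | "c = 0" "b = 0" "a \<noteq> - a"
    by blast
  then show ?thesis
  proof cases
    case 1
    then show ?thesis
      by (intro exI[of _ "matrix2 1 a 0 c"])
         (simp add: det_Y Y companion2_def matrix2_simps algebra_simps)
  next
    case 2
    then show ?thesis
      by (intro exI[of _ "matrix2 0 b 1 (- a)"])
         (simp add: det_Y Y companion2_def matrix2_simps algebra_simps)
  next
    case 3
    then have "- a - a \<noteq> 0"
      by (metis add_uminus_conv_diff eq_neg_iff_add_eq_0 minus_diff_eq)
    with 3 show ?thesis
      by (intro exI[of _ "matrix2 1 a 1 (- a)"])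
         (simp add: det_Y Y companion2_def matrix2_simps algebra_simps)
  qed
qed

lemma trace_companion2_conj:
  assumes "p * v - q * u = 1"
  shows "trace (companion2 D ** inv2 (matrix2 p q u v) ** companion2 D ** matrix2 p q u v) =
    - (D * D * (u * u) + D * (p * p) + D * (v * v) + q * q)"
  using assms by (simp add: inv2_def adj2_def companion2_def matrix2_simps algebra_simps)

lemma exists_conic_point:
  assumes D: "(D::'a::{finite,field}) \<noteq> 0" and s: "s \<noteq> 0"
  shows "\<exists>q v. v \<noteq> 0 \<and> q * q + D * (v * v) + s * v + D = 0"
proof (cases "(2::'a) = 0")
  case True
  obtain q where "q * q = - (D + s + D)"
    using square_surj_char_2[OF True] by blast
  then show ?thesis
    by (intro exI[of _ q] exI[of _ 1]) simp
next
  case False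
  have D4: "4 * D \<noteq> 0"
    using False D by (metis mult_eq_0_iff mult_2 numeral_Bit0)
  obtain w y where wy: "w * w + (4 * D) * (y * y) = s * s - 4 * D * D"
    using sum_of_squares_eq[OF D4] by blast
  obtain w' where w': "w' * w' + (4 * D) * (y * y) = s * s - 4 * D * D" "w' \<noteq> s"
  proof (cases "w = s")
    case True
    have "- w \<noteq> s"
      using True s False by (metis add_eq_0_iff2 mult_2 mult_eq_0_iff)
    then show ?thesis
      using that[of "- w"] wy by simp
  next
    case False
    then show ?thesis
      using that[of w] wy by simp
  qed
  define v where "v = (w' - s) / (2 * D)"
  have v: "2 * D * v = w' - s"
    unfolding v_def using False D by simp
  then have "v \<noteq> 0"
    using w'(2) by auto
  have "4 * D * (y * y + D * (v * v) + s * v + D) =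
      4 * D * (y * y) + (2 * D * v) * (2 * D * v) + 2 * s * (2 * D * v) + 4 * D * D"
    by (simp add: algebra_simps)
  also have "\<dots> = w' * w' + (4 * D) * (y * y) - (s * s - 4 * D * D)"
    unfolding v by (simp add: algebra_simps)
  also have "\<dots> = 0"
    using w'(1) by simp
  finally have "y * y + D * (v * v) + s * v + D = 0"
    using D4 by simp
  then show ?thesis
    using \<open>v \<noteq> 0\<close> by blast
qed

text \<open>The norm form \<open>\<alpha>\<^sup>2 + D \<beta>\<^sup>2\<close> is multiplicative, which makes the trace below factor.\<close>

lemma exists_SL2_trace_companion2_conj:
  assumes D: "(D::'a::{finite,field}) \<noteq> 0" and s: "s \<noteq> 0"
  shows "\<exists>K\<in>SL2. trace (companion2 D ** inv2 K ** companion2 D ** K) = s"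
proof -
  obtain q v where v: "v \<noteq> 0" and qv: "q * q + D * (v * v) + s * v + D = 0"
    using exists_conic_point[OF D s] by blast
  obtain \<alpha> \<beta> where \<alpha>\<beta>: "\<alpha> * \<alpha> + D * (\<beta> * \<beta>) = inverse v"
    using sum_of_squares_eq[OF D] by blast
  define K where "K = matrix2 \<alpha> (\<alpha> * q - D * \<beta> * v) \<beta> (\<beta> * q + \<alpha> * v)"
  have "\<alpha> * (\<beta> * q + \<alpha> * v) - (\<alpha> * q - D * \<beta> * v) * \<beta> = (\<alpha> * \<alpha> + D * (\<beta> * \<beta>)) * v"
    by (simp add: algebra_simps)
  also have "\<dots> = 1"
    using \<alpha>\<beta> v by simp
  finally have det_K: "\<alpha> * (\<beta> * q + \<alpha> * v) - (\<alpha> * q - D * \<beta> * v) * \<beta> = 1" .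
  have "trace (companion2 D ** inv2 K ** companion2 D ** K) =
      - (\<alpha> * \<alpha> + D * (\<beta> * \<beta>)) * (q * q + D * (v * v) + D)"
    unfolding K_def trace_companion2_conj[OF det_K] by (simp add: algebra_simps)
  also have "\<dots> = (\<alpha> * \<alpha> + D * (\<beta> * \<beta>)) * (s * v)"
  proof -
    have "q * q + D * (v * v) + D = - (s * v)"
      using qv by (subst eq_neg_iff_add_eq_0) (simp add: algebra_simps)
    then show ?thesis
      by (simp add: algebra_simps)
  qed
  also have "\<dots> = s"
    using \<alpha>\<beta> v by simp
  finally show ?thesis
    using det_K by (intro bexI[of _ K]) (simp_all add: K_def SL2_def det_2)
qed

lemma exists_SL2_trace_conj_product:
  fixes Y :: "'a::{finite,field}^2^2"
  assumes Y: "det Y \<noteq> 0" "trace Y = 0" "\<nexists>c. Y = mat c" and s: "s \<noteq> 0"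
  shows "\<exists>G\<in>SL2. trace (Y ** (inv2 G ** Y ** G)) = s"
proof -
  define C where "C = companion2 (det Y)"
  obtain H where H: "det H \<noteq> 0" "Y ** H = H ** C"
    using similar_companion2[OF Y(2,3)] unfolding C_def by blast
  obtain K where K: "det K = 1" "trace (C ** inv2 K ** C ** K) = s"
    using exists_SL2_trace_companion2_conj[OF Y(1) s] unfolding C_def SL2_def by blast
  define G where "G = H ** K ** inv2 H"
  have Y_eq: "Y = H ** C ** inv2 H"
    using H inv2_right_cancel[of H Y] by metis
  have det_G: "det G = 1"
    using H(1) K(1) by (simp add: G_def det_mul det_inv2)
  have inv_G: "inv2 G = H ** inv2 K ** inv2 H"
  proof (rule inv2_unique)
    show "det G \<noteq> 0"
      using det_G by simp
    show "H ** inv2 K ** inv2 H ** G = mat 1"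
      using H(1) K(1) by (simp add: G_def matrix_mul_assoc inv2_left_cancel inv2_left inv2_right)
  qed
  have "Y ** (inv2 G ** Y ** G) = H ** (C ** inv2 K ** C ** K) ** inv2 H"
    unfolding inv_G unfolding G_def Y_eq using H(1) by (simp add: matrix_mul_assoc inv2_left_cancel)
  then have "trace (Y ** (inv2 G ** Y ** G)) = s"
    using trace_conj[OF H(1)] K(2) by simp
  then show ?thesis
    using det_G by (auto simp: SL2_def)
qed

lemma ord_proj_gt_2_imp_nonscalar_trace:
  fixes T :: "'a::{finite,field}^2^2"
  assumes T: "T \<in> carrier GL2" and ord_T: "2 < group.ord PGL2 (proj T)"
  shows "T \<notin> scalars" and "trace T \<noteq> 0"
proof -
  interpret PGL2: group "PGL2 :: ('a^2^2) set monoid"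
    by (rule PGL2_group)
  have proj_T: "proj T \<in> carrier PGL2"
    using T by (simp add: PGL2_carrier)
  then show nonscalar: "T \<notin> scalars"
    using ord_T PGL2.ord_eq_1 proj_eq_one_iff[OF T] by auto
  show "trace T \<noteq> 0"
  proof
    assume "trace T = 0"
    then have "proj T [^]\<^bsub>PGL2\<^esub> (2::nat) = \<one>\<^bsub>PGL2\<^esub>"
      using proj_involution_iff_trace_eq_0[OF T nonscalar] proj_T by (simp add: numeral_2_eq_2)
    then have "group.ord PGL2 (proj T) dvd 2"
      using PGL2.pow_eq_id[OF proj_T] by simp
    with ord_T show False
      by (auto dest: dvd_imp_le)
  qed
qed

lemma exists_SL2_ord_proj_conj_product:
  fixes Y T :: "'a::{finite,field}^2^2"
  assumes Y: "Y \<in> carrier GL2" "Y \<notin> scalars" "trace Y = 0"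
    and T: "T \<in> SL2" "2 < group.ord PGL2 (proj T)" "of_nat (group.ord PGL2 (proj T)) \<noteq> (0::'a)"
  shows "\<exists>G\<in>SL2. group.ord PGL2 (proj (Y ** (inv2 G ** Y ** G))) = group.ord PGL2 (proj T)"
proof -
  have T_GL2: "T \<in> carrier GL2" and det_T: "det T = 1"
    using T(1) by (simp_all add: SL2_def)
  note T_invariants = ord_proj_gt_2_imp_nonscalar_trace[OF T_GL2 T(2)]
  obtain G where G: "G \<in> SL2" "trace (Y ** (inv2 G ** Y ** G)) = det Y * trace T"
    using exists_SL2_trace_conj_product[of Y "det Y * trace T"] Y T_invariants(2)
    by (auto simp: scalars_iff)
  define M where "M = Y ** (inv2 G ** Y ** G)"
  have det_M: "det M = (det Y)\<^sup>2 * det T"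
    using G(1) det_T by (simp add: M_def SL2_def det_mul det_inv2 power2_eq_square)
  then have "M \<in> carrier GL2"
    using Y(1) det_T by simp
  from ord_proj_eq_if_invariants[OF this T_GL2 T_invariants(1) _ _ det_M] Y(1) G(2) T(3)
  have "group.ord PGL2 (proj M) = group.ord PGL2 (proj T)"
    by (simp add: M_def)
  then show ?thesis
    using G(1) unfolding M_def by blast
qed

lemma exists_PSL2_conj_product_ord:
  fixes x t :: "('a::{finite,field}^2^2) set"
  assumes x: "x \<in> carrier PGL2" "x \<noteq> \<one>\<^bsub>PGL2\<^esub>" "x \<otimes>\<^bsub>PGL2\<^esub> x = \<one>\<^bsub>PGL2\<^esub>"
    and t: "t \<in> carrier PSL2" "group.ord PGL2 t = r"
    and r: "2 < r" "of_nat r \<noteq> (0::'a)"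
  shows "\<exists>g\<in>carrier PSL2. group.ord PGL2 (x \<otimes>\<^bsub>PGL2\<^esub> (inv\<^bsub>PGL2\<^esub> g \<otimes>\<^bsub>PGL2\<^esub> x \<otimes>\<^bsub>PGL2\<^esub> g)) = r"
proof -
  obtain Y where Y: "Y \<in> carrier GL2" "x = proj Y"
    using x(1) PGL2_carrier by auto
  have Y_nonscalar: "Y \<notin> scalars"
    using x(2) proj_eq_one_iff[OF Y(1)] Y by simp
  have "trace Y = 0"
    using x(3) Y proj_involution_iff_trace_eq_0[OF Y(1) Y_nonscalar] by simp
  moreover obtain T where T: "T \<in> SL2" "t = proj T"
    using t(1) by (auto simp: PSL2_def)
  ultimately obtain G where G: "G \<in> SL2" "group.ord PGL2 (proj (Y ** (inv2 G ** Y ** G))) = r"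
    using exists_SL2_ord_proj_conj_product[OF Y(1) Y_nonscalar _ T(1)] t(2) r by auto
  moreover have "proj (Y ** (inv2 G ** Y ** G)) =
      x \<otimes>\<^bsub>PGL2\<^esub> (inv\<^bsub>PGL2\<^esub> (proj G) \<otimes>\<^bsub>PGL2\<^esub> x \<otimes>\<^bsub>PGL2\<^esub> proj G)"
    using Y G(1)
    by (simp add: SL2_def inv_GL2 det_mul det_inv2 proj_mult flip: group_hom.hom_inv[OF proj_hom])
  moreover have "proj G \<in> carrier PSL2"
    using G(1) by (simp add: PSL2_def)
  ultimately show ?thesis
    by metis
qed

theorem lemma1p9:
  fixes x :: "('a::{finite,field}^2^2) set" and r :: nat
  assumes "simple_group (PSL2 :: ('a^2^2) set monoid)"
    and "Factorial_Ring.prime r" and "odd r"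
    and "r dvd card (carrier (PSL2 :: ('a^2^2) set monoid))"
    and "\<not> r dvd CARD('a)"
    and "x \<in> carrier PGL2" and "x \<noteq> \<one>\<^bsub>PGL2\<^esub>" and "x \<otimes>\<^bsub>PGL2\<^esub> x = \<one>\<^bsub>PGL2\<^esub>"
  shows "beta PGL2 (carrier PSL2) x r = 2"
proof -
  interpret PGL2: group "PGL2 :: ('a^2^2) set monoid"
    by (rule PGL2_group)
  have r: "2 < r"
    using prime_ge_2_nat[OF assms(2)] assms(3) by (cases "r = 2") auto
  obtain t where "t \<in> carrier PSL2" "PGL2.ord t = r"
    using PGL2.exists_ord_eq_prime_in_subgroup[OF PSL2_subgroup _ assms(2,4)] by auto
  then obtain g where g: "g \<in> carrier PSL2"
    and ord_g: "PGL2.ord (x \<otimes>\<^bsub>PGL2\<^esub> (inv\<^bsub>PGL2\<^esub> g \<otimes>\<^bsub>PGL2\<^esub> x \<otimes>\<^bsub>PGL2\<^esub> g)) = r"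
    using exists_PSL2_conj_product_ord[OF assms(6-8)] r of_nat_prime_neq_0[OF assms(2,5)] by blast
  have "g \<in> carrier PGL2"
    using g subgroup.subset[OF PSL2_subgroup] by blast
  moreover have "x \<otimes>\<^bsub>PGL2\<^esub> (inv\<^bsub>PGL2\<^esub> g \<otimes>\<^bsub>PGL2\<^esub> x \<otimes>\<^bsub>PGL2\<^esub> g)
      \<in> generate PGL2 {x, inv\<^bsub>PGL2\<^esub> g \<otimes>\<^bsub>PGL2\<^esub> x \<otimes>\<^bsub>PGL2\<^esub> g}"
    by (intro generate.eng generate.incl) auto
  ultimately have "r dvd card (generate PGL2 {x, inv\<^bsub>PGL2\<^esub> g \<otimes>\<^bsub>PGL2\<^esub> x \<otimes>\<^bsub>PGL2\<^esub> g})"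
    using PGL2.ord_dvd_card_generate[OF finite] ord_g assms(6) by auto
  then show ?thesis
    using PGL2.beta_involution_eq_2[OF subgroup.subset[OF PSL2_subgroup] assms(6,8) r
        subgroup.one_closed[OF PSL2_subgroup] g] assms(6)
    by simp
qed

end
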